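(* Let $k>1$ and let $\mathcal{F}_1$ be the foliation on $\mathbb{P}^2_k=\mathbb{P}(1,1,k)$ (of normal degree $2k+1$) induced by $$\delta=-k\,x_2(x_2-x_0x_1^{k-1})dx_0+k\,x_0x_2(x_1^{k-1}-x_0x_1^{k-2})dx_1+x_0(x_2-x_1^{k})dx_2.$$ Then no $\mathcal{F}_1$-invariant algebraic curve passes through the point $[1:1:1]$.
   Context: $\mathbb{P}(1,1,k)$ is the quotient of $\mathbb{C}^3\setminus\{0\}$ by $t\cdot(x_0,x_1,x_2)=(tx_0,tx_1,t^kx_2)$. An algebraic curve is the zero set of a nonconstant quasi-homogeneous polynomial $F$ (weights $1,1,k$); it is invariant by the foliation defined by $\delta$ if $\delta\wedge dF=F\Theta$ for some polynomial 2-form $\Theta$. *)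

theory Defs
  imports Complex_Main "HOL-Library.Poly_Mapping" "HOL-Library.Product_Plus"
begin

text \<open>Polynomials in C[x0,x1,x2]: finitely supported maps from exponent
  triples (i,j,l) (the monomial x0^i x1^j x2^l) to complex coefficients.\<close>

type_synonym pol3 = "(nat \<times> nat \<times> nat) \<Rightarrow>\<^sub>0 complex"

definition mon3 :: "nat \<Rightarrow> nat \<Rightarrow> nat \<Rightarrow> complex \<Rightarrow> pol3" where
  "mon3 i j l c = Poly_Mapping.single (i, j, l) c"

definition X0 :: pol3 where "X0 = mon3 1 0 0 1"
definition X1 :: pol3 where "X1 = mon3 0 1 0 1"
definition X2 :: pol3 where "X2 = mon3 0 0 1 1"

definition eval3 :: "pol3 \<Rightarrow> complex \<Rightarrow> complex \<Rightarrow> complex \<Rightarrow> complex" where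
  "eval3 p a b c = (\<Sum>m\<in>Poly_Mapping.keys p. Poly_Mapping.lookup p m * a ^ fst m * b ^ fst (snd m) * c ^ snd (snd m))"

definition pd0 :: "pol3 \<Rightarrow> pol3" where
  "pd0 p = (\<Sum>m\<in>Poly_Mapping.keys p. case m of (i, j, l) \<Rightarrow>
      mon3 (i - 1) j l (of_nat i * Poly_Mapping.lookup p m))"
definition pd1 :: "pol3 \<Rightarrow> pol3" where
  "pd1 p = (\<Sum>m\<in>Poly_Mapping.keys p. case m of (i, j, l) \<Rightarrow>
      mon3 i (j - 1) l (of_nat j * Poly_Mapping.lookup p m))"
definition pd2 :: "pol3 \<Rightarrow> pol3" where
  "pd2 p = (\<Sum>m\<in>Poly_Mapping.keys p. case m of (i, j, l) \<Rightarrow>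
      mon3 i j (l - 1) (of_nat l * Poly_Mapping.lookup p m))"

definition quasi_hom :: "nat \<Rightarrow> nat \<Rightarrow> pol3 \<Rightarrow> bool" where
  "quasi_hom k d p \<longleftrightarrow> (\<forall>m\<in>Poly_Mapping.keys p. fst m + fst (snd m) + k * snd (snd m) = d)"

definition nonconstant :: "pol3 \<Rightarrow> bool" where
  "nonconstant p \<longleftrightarrow> (\<exists>m\<in>Poly_Mapping.keys p. m \<noteq> (0, 0, 0))"

text \<open>A 1-form A0 dx0 + A1 dx1 + A2 dx2 with polynomial coefficients;
  delta \<and> dF has coefficients (A_i F_j - A_j F_i) on dx_i \<and> dx_j (i<j).
  Invariance: delta \<and> dF = F * Theta for a polynomial 2-form Theta.\<close>
definition invariant_curve :: "pol3 \<Rightarrow> pol3 \<Rightarrow> pol3 \<Rightarrow> pol3 \<Rightarrow> bool" where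
  "invariant_curve A0 A1 A2 F \<longleftrightarrow>
     (\<exists>T01 T02 T12 :: pol3.
        A0 * pd1 F - A1 * pd0 F = F * T01 \<and>
        A0 * pd2 F - A2 * pd0 F = F * T02 \<and>
        A1 * pd2 F - A2 * pd1 F = F * T12)"

definition delA0 :: "nat \<Rightarrow> pol3" where
  "delA0 k = - (of_nat k * X2 * (X2 - X0 * X1 ^ (k - 1)))"
definition delA1 :: "nat \<Rightarrow> pol3" where
  "delA1 k = of_nat k * X0 * X2 * (X1 ^ (k - 1) - X0 * X1 ^ (k - 2))"
definition delA2 :: "nat \<Rightarrow> pol3" where
  "delA2 k = X0 * (X2 - X1 ^ k)"

end

theory Submission
  imports Defs "HOL-Computational_Algebra.Polynomial"
begin

(* On the chart x1 = 1, with s = x0 and z = x2, the dx0 \<and> dx2 component of the invariance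
   condition reads D f = T f in C[s][z], where D = -k z (z - s) d/dz - s (z - 1) d/ds.
   Comparing z-degrees, and the s-degrees of the extreme z-coefficients, forces the cofactor
   to be T = \<alpha> + \<beta> s + \<gamma> z.  Coefficientwise, D f = T f is a recurrence along the
   support of f: at a lower corner (i, l) of the support it gives \<alpha> = i, at an upper
   corner \<gamma> = -(i + k l).  Hence the point (a, b) of minimal exponents lies in the support,
   and the weight i + k l at (a, b) equals that at the maximiser of i + 2 l, which forces the
   support to be {(a, b)}.  Quasi-homogeneity makes x1 = 1 injective on the monomials of F, so
   F is a monomial, and monomials do not vanish at [1:1:1]. *)

abbreviation coeff2 :: "'a::zero poly poly \<Rightarrow> nat \<Rightarrow> nat \<Rightarrow> 'a" where
  "coeff2 f i l \<equiv> coeff (coeff f l) i"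

lemma degree_le_one_imp_linear:
  fixes p :: "'a::zero poly"
  assumes "degree p \<le> 1"
  obtains a b where "p = [:a, b:]"
proof (cases "degree p")
  case 0
  then show ?thesis using that degree0_coeffs[of p] by fastforce
next
  case (Suc n)
  then show ?thesis using that degree1_coeffs[of p] assms by fastforce
qed

lemma degree_le_of_degree_mult_le:
  fixes p q :: "'a::idom poly"
  assumes "q \<noteq> 0" and "degree (p * q) \<le> degree q + m"
  shows "degree p \<le> m"
  using assms by (cases "p = 0") (simp_all add: degree_mult_eq)

lemma finite_coeff2_support: "finite {(i, l). coeff2 f i l \<noteq> 0}"
proof (rule finite_subset)
  show "{(i, l). coeff2 f i l \<noteq> 0} \<subseteq> (\<Union>l\<le>degree f. (\<lambda>i. (i, l)) ` {..degree (coeff f l)})"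
    by (force intro: le_degree)
qed simp

lemma coeff2_linear_mult:
  "coeff2 ([:[:\<alpha>, \<beta>:], [:\<gamma>:]:] * f) i l =
     \<alpha> * coeff2 f i l + (if i > 0 then \<beta> * coeff2 f (i - 1) l else 0)
       + (if l > 0 then \<gamma> * coeff2 f i (l - 1) else 0)"
  by (cases i; cases l) (simp_all add: coeff_pCons)

lemma single_support_of_recurrence:
  fixes c :: "nat \<Rightarrow> nat \<Rightarrow> 'a::field_char_0"
  assumes "k > 0"
    and fin: "finite {(i, l). c i l \<noteq> 0}"
    and nz: "c i1 l1 \<noteq> 0"
    and rec: "\<And>i l. of_nat i * c i l
        + (if i > 0 then of_nat (k * l) * c (i - 1) l else 0)
        - (if l > 0 then of_nat (i + k * (l - 1)) * c i (l - 1) else 0)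
      = \<alpha> * c i l + (if i > 0 then \<beta> * c (i - 1) l else 0) + (if l > 0 then \<gamma> * c i (l - 1) else 0)"
  shows "\<exists>a b. \<forall>i l. c i l \<noteq> 0 \<longleftrightarrow> (i, l) = (a, b)"
proof -
  have lower_corner: "\<alpha> = of_nat i"
    if "c i l \<noteq> 0" "i > 0 \<Longrightarrow> c (i - 1) l = 0" "l > 0 \<Longrightarrow> c i (l - 1) = 0" for i l
    using rec[of i l] that by (auto split: if_splits)
  have upper_corner: "\<gamma> = - of_nat (i + k * l)"
    if "c i l \<noteq> 0" "of_nat i * c i (Suc l) = \<alpha> * c i (Suc l)" "i > 0 \<Longrightarrow> c (i - 1) (Suc l) = 0"
    for i l
  proof -
    have "- (of_nat (i + k * l) * c i l) = \<gamma> * c i l"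
      using rec[of i "Suc l"] that(2,3) by (auto split: if_splits)
    then show ?thesis
      using that(1) by (metis minus_mult_left mult_cancel_right)
  qed
  obtain a l0 where "c a l0 \<noteq> 0" and a_min: "\<And>i l. c i l \<noteq> 0 \<Longrightarrow> a \<le> i"
    using ex_has_least_nat[of "\<lambda>(i, l). c i l \<noteq> 0" "(i1, l1)" fst] nz by auto
  then obtain b' where "c a b' \<noteq> 0" and b'_min: "\<And>l. c a l \<noteq> 0 \<Longrightarrow> b' \<le> l"
    using ex_has_least_nat[of "\<lambda>l. c a l \<noteq> 0" l0 id] by auto
  obtain a' b where "c a' b \<noteq> 0" and b_min: "\<And>i l. c i l \<noteq> 0 \<Longrightarrow> b \<le> l"
    using ex_has_least_nat[of "\<lambda>(i, l). c i l \<noteq> 0" "(i1, l1)" snd] nz by auto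
  then obtain a'' where cab: "c a'' b \<noteq> 0" and a''_min: "\<And>i. c i b \<noteq> 0 \<Longrightarrow> a'' \<le> i"
    using ex_has_least_nat[of "\<lambda>i. c i b \<noteq> 0" a' id] by auto
  have "\<alpha> = of_nat a"
    using lower_corner[of a b'] \<open>c a b' \<noteq> 0\<close> a_min b'_min by fastforce
  moreover have "\<alpha> = of_nat a''"
    using lower_corner[of a'' b] cab a''_min b_min by fastforce
  ultimately have "a'' = a" by simp
  with cab have "c a b \<noteq> 0" by simp
  have "\<gamma> = - of_nat (a + k * b)"
    using upper_corner[of a b] \<open>c a b \<noteq> 0\<close> \<open>\<alpha> = of_nat a\<close> a_min by fastforce
  \<comment> \<open>(i, l + 1) and (i - 1, l + 1) have larger i + 2 l, so a maximiser is an upper corner\<close>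
  obtain i0 L where "c i0 L \<noteq> 0" and top: "\<And>i l. c i l \<noteq> 0 \<Longrightarrow> i + 2 * l \<le> i0 + 2 * L"
  proof -
    let ?W = "(\<lambda>(i, l). i + 2 * l) ` {(i, l). c i l \<noteq> 0}"
    have "finite ?W" "?W \<noteq> {}" using fin nz by auto
    then have "Max ?W \<in> ?W" "\<And>i l. c i l \<noteq> 0 \<Longrightarrow> i + 2 * l \<le> Max ?W"
      by (auto intro!: Max_ge)
    then show ?thesis using that by auto
  qed
  have "\<gamma> = - of_nat (i0 + k * L)"
    using upper_corner[of i0 L] \<open>c i0 L \<noteq> 0\<close> top[of i0 "Suc L"] top[of "i0 - 1" "Suc L"] by fastforce
  with \<open>\<gamma> = - of_nat (a + k * b)\<close> have "i0 + k * L = a + k * b"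
    by (simp flip: of_nat_add of_nat_mult)
  moreover have "a \<le> i0" "b \<le> L"
    using a_min b_min \<open>c i0 L \<noteq> 0\<close> by auto
  ultimately have "i0 = a" "L = b"
    using \<open>k > 0\<close> by (auto simp: le_iff_add algebra_simps)
  then have "c i l \<noteq> 0 \<longleftrightarrow> (i, l) = (a, b)" for i l
    using top[of i l] a_min[of i l] b_min[of i l] \<open>c a b \<noteq> 0\<close> by fastforce
  then show ?thesis by blast
qed

(* The dx0 \<and> dx2 coefficient A0 dF/dx2 - A2 dF/dx0 of \<delta> \<and> dF at x1 = 1, with the inner
   variable s = x0 and the outer one z = x2. *)
definition chart_derivation :: "nat \<Rightarrow> 'a::idom poly poly \<Rightarrow> 'a poly poly" where
  "chart_derivation k f =
     - (of_nat k * [:0, 1:] * ([:0, 1:] - [:[:0, 1:]:])) * pderiv f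
     - [:[:0, 1:]:] * ([:0, 1:] - 1) * map_poly pderiv f"

lemma coeff2_chart_derivation:
  fixes f :: "'a::idom poly poly"
  shows "coeff2 (chart_derivation k f) i l =
      of_nat i * coeff2 f i l
    + (if i > 0 then of_nat (k * l) * coeff2 f (i - 1) l else 0)
    - (if l > 0 then of_nat (i + k * (l - 1)) * coeff2 f i (l - 1) else 0)"
proof -
  let ?s = "[:[:0, 1:]:] :: 'a poly poly" and ?z = "[:0, 1:] :: 'a poly poly"
  have expand: "- (K * z * (z - s)) * a - s * (z - 1) * b
      = s * b - z * (s * b) + K * (z * (s * a)) - K * (z * (z * a))" for K z s a b :: "'a poly poly"
    by (simp add: algebra_simps)
  have expansion: "chart_derivation k f = ?s * map_poly pderiv f - ?z * (?s * map_poly pderiv f)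
      + of_nat k * (?z * (?s * pderiv f)) - of_nat k * (?z * (?z * pderiv f))"
    unfolding chart_derivation_def by (rule expand)
  show ?thesis
    unfolding expansion
    by (cases i; cases l)
       (simp_all add: coeff_pderiv coeff_map_poly of_nat_poly coeff_pCons algebra_simps split: nat.split)
qed

lemma cofactor_of_chart_derivation:
  fixes f T :: "'a::idom poly poly"
  assumes "f \<noteq> 0" and inv: "chart_derivation k f = T * f"
  obtains \<alpha> \<beta> \<gamma> where "T = [:[:\<alpha>, \<beta>:], [:\<gamma>:]:]"
proof -
  define n where "n = degree f"
  have f_above: "coeff f l = 0" if "l > n" for l
    using that by (simp add: n_def coeff_eq_0)
  have "degree (T * f) \<le> degree f + 1"
    unfolding inv[symmetric] n_def[symmetric]
    by (intro degree_le allI impI poly_eqI) (simp add: coeff2_chart_derivation f_above)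
  then obtain t0 t1 where T: "T = [:t0, t1:]"
    using degree_le_of_degree_mult_le[OF \<open>f \<noteq> 0\<close>] degree_le_one_imp_linear by metis
  have coeff_Tf: "coeff (T * f) l = t0 * coeff f l + (if l > 0 then t1 * coeff f (l - 1) else 0)" for l
    by (cases l) (simp_all add: T)
  have "coeff f n \<noteq> 0"
    using \<open>f \<noteq> 0\<close> by (simp add: n_def)
  moreover have "degree (t1 * coeff f n) \<le> degree (coeff f n) + 0"
  proof -
    have "t1 * coeff f n = coeff (T * f) (Suc n)"
      using coeff_Tf[of "Suc n"] f_above[of "Suc n"] by simp
    also have "degree \<dots> \<le> degree (coeff f n)"
      unfolding inv[symmetric]
      by (intro degree_le allI impI) (simp add: coeff2_chart_derivation f_above coeff_eq_0)
    finally show ?thesis by simp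
  qed
  ultimately obtain \<gamma> where "t1 = [:\<gamma>:]"
    using degree_le_of_degree_mult_le degree0_coeffs by (metis le_zero_eq)
  define b where "b = (LEAST l. coeff f l \<noteq> 0)"
  have "coeff f b \<noteq> 0"
    unfolding b_def by (rule LeastI) (fact \<open>coeff f n \<noteq> 0\<close>)
  have f_below: "coeff f l = 0" if "l < b" for l
    using that not_less_Least unfolding b_def by blast
  have "degree (t0 * coeff f b) \<le> degree (coeff f b) + 1"
  proof -
    have "t0 * coeff f b = coeff (T * f) b"
      using coeff_Tf[of b] f_below[of "b - 1"] by (cases "b = 0") simp_all
    also have "degree \<dots> \<le> degree (coeff f b) + 1"
      unfolding inv[symmetric]
      by (intro degree_le allI impI) (simp add: coeff2_chart_derivation f_below coeff_eq_0)
    finally show ?thesis .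
  qed
  then obtain \<alpha> \<beta> where "t0 = [:\<alpha>, \<beta>:]"
    using degree_le_of_degree_mult_le[OF \<open>coeff f b \<noteq> 0\<close>] degree_le_one_imp_linear by metis
  with T \<open>t1 = [:\<gamma>:]\<close> show ?thesis using that by simp
qed

lemma chart_invariant_single_term:
  fixes f T :: "'a::field_char_0 poly poly"
  assumes "k > 0" and "f \<noteq> 0" and inv: "chart_derivation k f = T * f"
  shows "\<exists>a b. \<forall>i l. coeff2 f i l \<noteq> 0 \<longleftrightarrow> (i, l) = (a, b)"
proof -
  obtain \<alpha> \<beta> \<gamma> where "T = [:[:\<alpha>, \<beta>:], [:\<gamma>:]:]"
    using cofactor_of_chart_derivation[OF \<open>f \<noteq> 0\<close> inv] .
  then have "coeff2 (chart_derivation k f) i l = coeff2 ([:[:\<alpha>, \<beta>:], [:\<gamma>:]:] * f) i l" for i l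
    by (simp add: inv)
  moreover obtain i1 l1 where "coeff2 f i1 l1 \<noteq> 0"
    using \<open>f \<noteq> 0\<close> by (metis leading_coeff_neq_0)
  ultimately show ?thesis
    using single_support_of_recurrence[OF \<open>k > 0\<close> finite_coeff2_support]
    unfolding coeff2_chart_derivation coeff2_linear_mult by blast
qed

lemma poly_mapping_sum_single:
  "p = (\<Sum>m\<in>Poly_Mapping.keys p. Poly_Mapping.single m (Poly_Mapping.lookup p m))"
  by (rule poly_mapping_eqI)
     (simp add: Poly_Mapping.lookup_sum lookup_single when_def in_keys_iff sum.delta' split: if_splits)

definition dehom1 :: "pol3 \<Rightarrow> complex poly poly" where
  "dehom1 p = (\<Sum>m\<in>Poly_Mapping.keys p. monom (monom (Poly_Mapping.lookup p m) (fst m)) (snd (snd m)))"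

lemma dehom1_eq_sum_superset:
  assumes "finite A" "Poly_Mapping.keys p \<subseteq> A"
  shows "dehom1 p = (\<Sum>m\<in>A. monom (monom (Poly_Mapping.lookup p m) (fst m)) (snd (snd m)))"
  unfolding dehom1_def
  by (rule sum.mono_neutral_left) (use assms in \<open>auto simp: in_keys_iff\<close>)

lemma dehom1_add: "dehom1 (p + q) = dehom1 p + dehom1 q"
proof -
  let ?A = "Poly_Mapping.keys p \<union> Poly_Mapping.keys q"
  have "Poly_Mapping.keys (p + q) \<subseteq> ?A"
    by (rule Poly_Mapping.keys_add)
  then show ?thesis
    by (simp add: dehom1_eq_sum_superset[of ?A] Poly_Mapping.lookup_add sum.distrib flip: add_monom)
qed

lemma dehom1_zero [simp]: "dehom1 0 = 0"
  by (simp add: dehom1_def)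

lemma dehom1_sum: "dehom1 (sum f A) = (\<Sum>x\<in>A. dehom1 (f x))"
  by (induction A rule: infinite_finite_induct) (auto simp: dehom1_add)

lemma dehom1_single: "dehom1 (Poly_Mapping.single m c) = monom (monom c (fst m)) (snd (snd m))"
  by (cases "c = 0") (simp_all add: dehom1_def)

lemma dehom1_mult: "dehom1 (p * q) = dehom1 p * dehom1 q"
proof -
  have "p * q = (\<Sum>m\<in>Poly_Mapping.keys p. \<Sum>m'\<in>Poly_Mapping.keys q.
      Poly_Mapping.single (m + m') (Poly_Mapping.lookup p m * Poly_Mapping.lookup q m'))"
    by (subst (1 2) poly_mapping_sum_single) (simp add: sum_product mult_single)
  then have "dehom1 (p * q) = (\<Sum>m\<in>Poly_Mapping.keys p. \<Sum>m'\<in>Poly_Mapping.keys q.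
      monom (monom (Poly_Mapping.lookup p m * Poly_Mapping.lookup q m') (fst m + fst m'))
        (snd (snd m) + snd (snd m')))"
    by (simp add: dehom1_sum dehom1_single)
  also have "\<dots> = dehom1 p * dehom1 q"
    by (simp add: dehom1_def sum_product mult_monom)
  finally show ?thesis .
qed

lemma dehom1_uminus: "dehom1 (- p) = - dehom1 p"
  using dehom1_add[of p "- p"] by (simp add: eq_neg_iff_add_eq_0 add.commute)

lemma dehom1_diff: "dehom1 (p - q) = dehom1 p - dehom1 q"
  using dehom1_add[of p "- q"] by (simp add: dehom1_uminus)

lemma dehom1_one [simp]: "dehom1 1 = 1"
  by (simp add: dehom1_single flip: single_one)

lemma dehom1_of_nat: "dehom1 (of_nat n) = of_nat n"
  by (induction n) (simp_all add: dehom1_add)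

lemma dehom1_power: "dehom1 (p ^ n) = dehom1 p ^ n"
  by (induction n) (simp_all add: dehom1_mult)

lemma dehom1_mon3: "dehom1 (mon3 i j l c) = monom (monom c i) l"
  by (simp add: mon3_def dehom1_single)

lemma dehom1_X0: "dehom1 X0 = [:[:0, 1:]:]"
  by (simp add: X0_def dehom1_mon3 monom_Suc monom_0 one_pCons)

lemma dehom1_X1: "dehom1 X1 = 1"
  by (simp add: X1_def dehom1_mon3 monom_eq_1)

lemma dehom1_X2: "dehom1 X2 = [:0, 1:]"
  by (simp add: X2_def dehom1_mon3 monom_Suc monom_eq_1)

lemma coeff2_dehom1:
  "coeff2 (dehom1 p) i l =
     (\<Sum>m\<in>Poly_Mapping.keys p. if fst m = i \<and> snd (snd m) = l then Poly_Mapping.lookup p m else 0)"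
  unfolding dehom1_def coeff_sum by (intro sum.cong refl) simp

lemma dehom1_pd0: "dehom1 (pd0 p) = map_poly pderiv (dehom1 p)"
proof (intro poly_eqI)
  fix l i
  have "coeff2 (dehom1 (pd0 p)) i l = (\<Sum>m\<in>Poly_Mapping.keys p.
      if fst m - 1 = i \<and> snd (snd m) = l then of_nat (fst m) * Poly_Mapping.lookup p m else 0)"
    unfolding pd0_def dehom1_sum coeff_sum
    by (intro sum.cong refl) (auto simp: dehom1_mon3 split: prod.splits)
  also have "\<dots> = of_nat (Suc i) * coeff2 (dehom1 p) (Suc i) l"
    unfolding coeff2_dehom1 sum_distrib_left by (intro sum.cong refl) auto
  finally show "coeff2 (dehom1 (pd0 p)) i l = coeff2 (map_poly pderiv (dehom1 p)) i l"
    by (simp add: coeff_map_poly coeff_pderiv)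
qed

lemma dehom1_pd2: "dehom1 (pd2 p) = pderiv (dehom1 p)"
proof (intro poly_eqI)
  fix l i
  have "coeff2 (dehom1 (pd2 p)) i l = (\<Sum>m\<in>Poly_Mapping.keys p.
      if fst m = i \<and> snd (snd m) - 1 = l then of_nat (snd (snd m)) * Poly_Mapping.lookup p m else 0)"
    unfolding pd2_def dehom1_sum coeff_sum
    by (intro sum.cong refl) (auto simp: dehom1_mon3 split: prod.splits)
  also have "\<dots> = of_nat (Suc l) * coeff2 (dehom1 p) i (Suc l)"
    unfolding coeff2_dehom1 sum_distrib_left by (intro sum.cong refl) auto
  finally show "coeff2 (dehom1 (pd2 p)) i l = coeff2 (pderiv (dehom1 p)) i l"
    by (simp add: coeff_pderiv of_nat_poly)
qed

lemma dehom1_invariance_dx0_dx2: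
  "dehom1 (delA0 k * pd2 F - delA2 k * pd0 F) = chart_derivation k (dehom1 F)"
  by (simp only: delA0_def delA2_def chart_derivation_def dehom1_diff dehom1_uminus dehom1_mult
      dehom1_power dehom1_of_nat dehom1_X0 dehom1_X1 dehom1_X2 dehom1_pd0 dehom1_pd2
      power_one mult_1_right)

lemma quasi_hom_keys_eqI:
  assumes "quasi_hom k d F" "m \<in> Poly_Mapping.keys F" "m' \<in> Poly_Mapping.keys F"
    and "fst m = fst m'" "snd (snd m) = snd (snd m')"
  shows "m = m'"
  using assms unfolding quasi_hom_def by (cases m; cases m') fastforce

lemma coeff2_dehom1_quasi_hom:
  assumes "quasi_hom k d F" "m \<in> Poly_Mapping.keys F"
  shows "coeff2 (dehom1 F) (fst m) (snd (snd m)) = Poly_Mapping.lookup F m"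
proof -
  have "coeff2 (dehom1 F) (fst m) (snd (snd m)) =
      (\<Sum>m'\<in>Poly_Mapping.keys F. if m' = m then Poly_Mapping.lookup F m' else 0)"
    unfolding coeff2_dehom1 using quasi_hom_keys_eqI[OF assms(1) _ assms(2)]
    by (intro sum.cong refl) auto
  also have "\<dots> = Poly_Mapping.lookup F m"
    using assms(2) by simp
  finally show ?thesis .
qed

lemma invariant_quasi_hom_curve_is_monomial:
  assumes "k > 0" and qh: "quasi_hom k d F" and "F \<noteq> 0"
    and "invariant_curve (delA0 k) (delA1 k) (delA2 k) F"
  obtains m where "Poly_Mapping.keys F = {m}"
proof -
  obtain T where "delA0 k * pd2 F - delA2 k * pd0 F = F * T"
    using assms(4) unfolding invariant_curve_def by blast
  then have inv: "chart_derivation k (dehom1 F) = dehom1 T * dehom1 F"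
    by (metis dehom1_invariance_dx0_dx2 dehom1_mult mult.commute)
  obtain m where m: "m \<in> Poly_Mapping.keys F"
    using \<open>F \<noteq> 0\<close> by (metis all_not_in_conv keys_eq_empty)
  then have "dehom1 F \<noteq> 0"
    using coeff2_dehom1_quasi_hom[OF qh m] by (auto simp: in_keys_iff)
  then obtain a b where single: "\<And>i l. coeff2 (dehom1 F) i l \<noteq> 0 \<longleftrightarrow> (i, l) = (a, b)"
    using chart_invariant_single_term[OF \<open>k > 0\<close> _ inv] by blast
  have "fst m' = a \<and> snd (snd m') = b" if "m' \<in> Poly_Mapping.keys F" for m'
    using single[where i = "fst m'" and l = "snd (snd m')"] coeff2_dehom1_quasi_hom[OF qh that] that
    by (simp add: in_keys_iff)
  then have "Poly_Mapping.keys F = {m}"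
    using quasi_hom_keys_eqI[OF qh _ m] m by blast
  then show ?thesis ..
qed

theorem lemma4p10:
  fixes k d :: nat and F :: pol3
  assumes "k > 1"
    and "quasi_hom k d F"
    and "nonconstant F"
    and "invariant_curve (delA0 k) (delA1 k) (delA2 k) F"
  shows "eval3 F 1 1 1 \<noteq> 0"
proof -
  have "k > 0" "F \<noteq> 0"
    using \<open>k > 1\<close> \<open>nonconstant F\<close> by (auto simp: nonconstant_def)
  then obtain m where "Poly_Mapping.keys F = {m}"
    using invariant_quasi_hom_curve_is_monomial assms(2,4) by blast
  then have "eval3 F 1 1 1 = Poly_Mapping.lookup F m"
    by (simp add: eval3_def)
  moreover have "Poly_Mapping.lookup F m \<noteq> 0"
    using \<open>Poly_Mapping.keys F = {m}\<close> by (metis in_keys_iff singletonI)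
  ultimately show ?thesis by simp
qed

end
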